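(* Let $f_1,f_2:[0,1]\to[0,1]$ be continuous functions such that $f_1(0)=f_2(0)=0$ and $f_1(1)=f_2(1)=1$. If $f_1\in\mathcal U$, then there exist continuous functions $g_1,g_2:[0,1]\to[0,1]$ such that $g_1(0)=g_2(0)=0$, $g_1(1)=g_2(1)=1$, and $f_1\circ g_1=f_2\circ g_2$.
   Context: A function $f:[0,1]\to\mathbb{R}$ is called piecewise monotone if there is a partition of $[0,1]$ into finitely many subintervals on each of which $f$ is strictly increasing or strictly decreasing. $\mathcal U$ denotes the set of piecewise monotone continuous functions $f:[0,1]\to[0,1]$ with the property that, for every $c\in[0,1]$, the set $f^{-1}(c)$ does not contain both a local maximum point and a local minimum point of $f$. *)

theory Defs
  imports "HOL-Analysis.Analysis"
begin

definition piecewise_monotone :: "(real \<Rightarrow> real) \<Rightarrow> bool" where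
  "piecewise_monotone f \<longleftrightarrow>
     (\<exists>(x :: nat \<Rightarrow> real) n. n \<ge> 1 \<and> x 0 = 0 \<and> x n = 1 \<and>
        (\<forall>i<n. x i < x (Suc i)) \<and>
        (\<forall>i<n. strict_mono_on {x i..x (Suc i)} f \<or> strict_antimono_on {x i..x (Suc i)} f))"

definition local_max_point :: "(real \<Rightarrow> real) \<Rightarrow> real \<Rightarrow> bool" where
  "local_max_point f p \<longleftrightarrow> p \<in> {0..1} \<and>
     (\<exists>e>0. \<forall>y\<in>{0..1}. \<bar>y - p\<bar> < e \<longrightarrow> f y \<le> f p)"

definition local_min_point :: "(real \<Rightarrow> real) \<Rightarrow> real \<Rightarrow> bool" where
  "local_min_point f p \<longleftrightarrow> p \<in> {0..1} \<and>
     (\<exists>e>0. \<forall>y\<in>{0..1}. \<bar>y - p\<bar> < e \<longrightarrow> f p \<le> f y)"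

definition class_U :: "(real \<Rightarrow> real) set" where
  "class_U = {f. piecewise_monotone f \<and> continuous_on {0..1} f \<and> f ` {0..1} \<subseteq> {0..1} \<and>
     (\<forall>c\<in>{0..1}. \<not> ((\<exists>p. local_max_point f p \<and> f p = c) \<and>
                         (\<exists>q. local_min_point f q \<and> f q = c)))}"

end

theory Submission
  imports Defs
begin

text \<open>Call \<open>f\<close> universal if every mountain \<open>F\<close> (a continuous self-map of \<open>[0, 1]\<close> fixing
  \<open>0\<close> and \<open>1\<close>) admits a climbing pair with \<open>f\<close>.

  Universality passes from \<open>h\<close> and \<open>Z\<close> to \<open>h \<circ> Z\<close>. Strictly increasing mountains are
  universal, and so are zigzags (up, down, up with the valley below the peak): the two climbers
  move in the coincidence set \<open>{(s, t). f s = F t}\<close> along the three monotone branches of \<open>f\<close>,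
  and by uniform continuity of \<open>F\<close> finitely many switches between branches reach \<open>(1, 1)\<close>.
  A piecewise monotone mountain is reduced by induction on the number of pieces: adjacent pieces
  of equal direction are merged, and otherwise a turn of shortest amplitude is folded away,
  writing \<open>f = g \<circ> Z\<close> with \<open>Z\<close> a zigzag and \<open>g\<close> having two pieces fewer.\<close>

section \<open>Mountains and climbing pairs\<close>

definition mountain :: "(real \<Rightarrow> real) \<Rightarrow> bool" where
  "mountain g \<longleftrightarrow> continuous_on {0..1} g \<and> g ` {0..1} \<subseteq> {0..1} \<and> g 0 = 0 \<and> g 1 = 1"

definition climbing_pair ::
    "(real \<Rightarrow> real) \<Rightarrow> (real \<Rightarrow> real) \<Rightarrow> (real \<Rightarrow> real) \<Rightarrow> (real \<Rightarrow> real) \<Rightarrow> bool" where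
  "climbing_pair f F g1 g2 \<longleftrightarrow> mountain g1 \<and> mountain g2 \<and> (\<forall>t\<in>{0..1}. f (g1 t) = F (g2 t))"

definition universal_mountain :: "(real \<Rightarrow> real) \<Rightarrow> bool" where
  "universal_mountain f \<longleftrightarrow> (\<forall>F. mountain F \<longrightarrow> (\<exists>g1 g2. climbing_pair f F g1 g2))"

definition coincidence_set :: "(real \<Rightarrow> real) \<Rightarrow> (real \<Rightarrow> real) \<Rightarrow> (real \<times> real) set" where
  "coincidence_set f F = {(s, t). s \<in> {0..1} \<and> t \<in> {0..1} \<and> f s = F t}"

lemma mountain_range: "mountain g \<Longrightarrow> s \<in> {0..1} \<Longrightarrow> g s \<in> {0..1}"
  unfolding mountain_def by blast

lemma climbing_pair_if_path_component:
  assumes "path_component (coincidence_set f F) (0, 0) (1, 1)"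
  shows "\<exists>g1 g2. climbing_pair f F g1 g2"
proof -
  obtain g where g: "path g" "path_image g \<subseteq> coincidence_set f F"
    "pathstart g = (0, 0)" "pathfinish g = (1, 1)"
    using assms unfolding path_component_def by blast
  have "continuous_on {0..1} g"
    using g(1) unfolding path_def .
  then have "continuous_on {0..1} (fst \<circ> g)" "continuous_on {0..1} (snd \<circ> g)"
    unfolding o_def by (fact continuous_on_fst continuous_on_snd)+
  moreover have "fst (g t) \<in> {0..1} \<and> snd (g t) \<in> {0..1} \<and> f (fst (g t)) = F (snd (g t))"
    if "t \<in> {0..1}" for t
  proof -
    have "g t \<in> coincidence_set f F"
      using g(2) that unfolding path_image_def by blast
    then show ?thesis
      unfolding coincidence_set_def by (simp add: case_prod_beta)
  qed
  moreover have "g 0 = (0, 0)" "g 1 = (1, 1)"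
    using g(3,4) unfolding pathstart_def pathfinish_def by auto
  ultimately have "climbing_pair f F (fst \<circ> g) (snd \<circ> g)"
    unfolding climbing_pair_def mountain_def by (auto simp: image_subset_iff)
  then show ?thesis by blast
qed

text \<open>Given a pair for \<open>h\<close> and \<open>F\<close>, the first path \<open>g1\<close> is itself a mountain, so universality of
  \<open>Z\<close> lifts \<open>g1\<close> through \<open>Z\<close>.\<close>
lemma universal_mountain_comp:
  assumes h: "universal_mountain h" and Z: "universal_mountain Z"
    and f_eq: "\<forall>s\<in>{0..1}. f s = h (Z s)"
  shows "universal_mountain f"
  unfolding universal_mountain_def
proof (intro allI impI)
  fix F assume "mountain F"
  then obtain g1 g2 where g: "climbing_pair h F g1 g2"
    using h unfolding universal_mountain_def by blast
  then obtain k1 k2 where k: "climbing_pair Z g1 k1 k2"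
    using Z unfolding universal_mountain_def climbing_pair_def by blast
  have "mountain (g2 \<circ> k2)"
    using g k unfolding climbing_pair_def mountain_def
    by (auto intro: continuous_on_compose2 simp: image_subset_iff)
  moreover have "f (k1 t) = F ((g2 \<circ> k2) t)" if "t \<in> {0..1}" for t
  proof -
    have "k1 t \<in> {0..1}" "k2 t \<in> {0..1}"
      using k that mountain_range unfolding climbing_pair_def by auto
    then have "f (k1 t) = h (g1 (k2 t))"
      using f_eq k that unfolding climbing_pair_def by simp
    also have "\<dots> = F (g2 (k2 t))"
      using g \<open>k2 t \<in> {0..1}\<close> unfolding climbing_pair_def by simp
    finally show ?thesis by simp
  qed
  ultimately have "climbing_pair f F k1 (g2 \<circ> k2)"
    using k unfolding climbing_pair_def by blast
  then show "\<exists>g1 g2. climbing_pair f F g1 g2" by blast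
qed

section \<open>Strictly monotone branches\<close>

lemma strict_antimono_on_imp_inj_on:
  fixes f :: "'a::linorder \<Rightarrow> 'b::preorder"
  assumes "strict_antimono_on A f"
  shows "inj_on f A"
proof (rule inj_onI)
  fix x y assume "x \<in> A" "y \<in> A" "f x = f y"
  then show "x = y"
    by (cases x y rule: linorder_cases) (auto dest: monotone_onD[OF assms])
qed

lemma monotone_on_cong:
  assumes "\<And>x. x \<in> A \<Longrightarrow> f x = g x"
  shows "monotone_on A orda ordb f \<longleftrightarrow> monotone_on A orda ordb g"
  using assms unfolding monotone_on_def by auto

lemma monotone_on_Icc_join:
  fixes f :: "'a::linorder \<Rightarrow> 'b"
  assumes "monotone_on {a..b} (<) ord f" "monotone_on {b..c} (<) ord f" "transp ord"
  shows "monotone_on {a..c} (<) ord f"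
proof (rule monotone_onI)
  fix s t assume "s \<in> {a..c}" "t \<in> {a..c}" "s < t"
  then consider "t \<le> b" | "b \<le> s" | "s < b" "b < t"
    by fastforce
  then show "ord (f s) (f t)"
  proof cases
    case 1
    then show ?thesis
      using monotone_onD[OF assms(1)] \<open>s \<in> {a..c}\<close> \<open>t \<in> {a..c}\<close> \<open>s < t\<close> by simp
  next
    case 2
    then show ?thesis
      using monotone_onD[OF assms(2)] \<open>s \<in> {a..c}\<close> \<open>t \<in> {a..c}\<close> \<open>s < t\<close> by simp
  next
    case 3
    then have "ord (f s) (f b)" "ord (f b) (f t)"
      using monotone_onD[OF assms(1)] monotone_onD[OF assms(2)] \<open>s \<in> {a..c}\<close> \<open>t \<in> {a..c}\<close>
      by auto
    then show ?thesis
      by (rule transpD[OF assms(3)])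
  qed
qed

lemma strict_mono_on_uminus_iff:
  "strict_mono_on S (\<lambda>s. - f s) \<longleftrightarrow> strict_antimono_on S (f :: real \<Rightarrow> real)"
  unfolding monotone_on_def by auto

lemma strict_antimono_on_uminus_iff:
  "strict_antimono_on S (\<lambda>s. - f s) \<longleftrightarrow> strict_mono_on S (f :: real \<Rightarrow> real)"
  unfolding monotone_on_def by auto

lemma strict_monotone_on_in_segment:
  fixes f :: "real \<Rightarrow> real"
  assumes "strict_mono_on {a..b} f \<or> strict_antimono_on {a..b} f" "s \<in> {a..b}"
  shows "f s \<in> closed_segment (f a) (f b)"
proof -
  have ab: "a \<in> {a..b}" "b \<in> {a..b}" "a \<le> s" "s \<le> b"
    using assms(2) by auto
  from assms(1) consider "strict_mono_on {a..b} f" | "strict_mono_on {a..b} (\<lambda>s. - f s)"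
    using strict_mono_on_uminus_iff by blast
  then show ?thesis
  proof cases
    case 1
    then have "f a \<le> f s" "f s \<le> f b"
      using strict_mono_on_leD[OF 1] ab by auto
    then show ?thesis
      by (auto simp: closed_segment_eq_real_ivl)
  next
    case 2
    then have "f b \<le> f s" "f s \<le> f a"
      using strict_mono_on_leD[OF 2] ab by auto
    then show ?thesis
      by (auto simp: closed_segment_eq_real_ivl)
  qed
qed

lemma path_component_coincidence_set_branch:
  fixes f F :: "real \<Rightarrow> real"
  assumes f: "continuous_on {c..d} f" "strict_mono_on {c..d} f \<or> strict_antimono_on {c..d} f"
      "{c..d} \<subseteq> {0..1}"
    and F: "continuous_on {t0..t1} F" "{t0..t1} \<subseteq> {0..1}"
      "F ` {t0..t1} \<subseteq> closed_segment (f c) (f d)"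
    and "t0 \<le> t1" "s0 \<in> {c..d}" "s1 \<in> {c..d}" "f s0 = F t0" "f s1 = F t1"
  shows "path_component (coincidence_set f F) (s0, t0) (s1, t1)"
proof -
  have inj: "inj_on f {c..d}"
    using f(2) strict_mono_on_imp_inj_on strict_antimono_on_imp_inj_on by blast
  have "closed_segment (f c) (f d) \<subseteq> f ` {c..d}"
    using IVT'_closed_segment_real[of _ f c d] f(1) assms(8) closed_segment_eq_real_ivl[of c d]
    by (fastforce intro: rev_image_eqI)
  then have F_image: "F ` {t0..t1} \<subseteq> f ` {c..d}"
    using F(3) by blast
  define \<phi> where "\<phi> = inv_into {c..d} f"
  define \<gamma> where "\<gamma> = (\<lambda>t. (\<phi> (F t), t))"
  have "continuous_on (f ` {c..d}) \<phi>"
    unfolding \<phi>_def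
    by (rule continuous_on_inv[OF f(1) compact_Icc]) (simp add: inv_into_f_f[OF inj])
  then have "continuous_on {t0..t1} (\<lambda>t. \<phi> (F t))"
    using F(1) F_image by (rule continuous_on_compose2)
  then have "continuous_on {t0..t1} \<gamma>"
    unfolding \<gamma>_def by (intro continuous_on_Pair continuous_on_id)
  then have connected: "path_connected (\<gamma> ` {t0..t1})"
    by (rule path_connected_continuous_image) (simp add: convex_imp_path_connected)
  have sub: "\<gamma> ` {t0..t1} \<subseteq> coincidence_set f F"
  proof
    fix z assume "z \<in> \<gamma> ` {t0..t1}"
    then obtain t where t: "t \<in> {t0..t1}" "z = (\<phi> (F t), t)"
      unfolding \<gamma>_def by blast
    have Ft: "F t \<in> f ` {c..d}"
      using F_image t(1) by blast
    have "\<phi> (F t) \<in> {0..1}" "f (\<phi> (F t)) = F t"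
      using subsetD[OF f(3) inv_into_into[OF Ft]] f_inv_into_f[OF Ft] unfolding \<phi>_def by auto
    then show "z \<in> coincidence_set f F"
      using F(2) t unfolding coincidence_set_def by auto
  qed
  have "(s0, t0) = \<gamma> t0" "(s1, t1) = \<gamma> t1"
    using assms(8-11) unfolding \<gamma>_def \<phi>_def
    by (simp_all flip: assms(10,11) add: inv_into_f_f[OF inj])
  then have "(s0, t0) \<in> \<gamma> ` {t0..t1}" "(s1, t1) \<in> \<gamma> ` {t0..t1}"
    using \<open>t0 \<le> t1\<close> by (auto intro: rev_image_eqI)
  then have "path_component (\<gamma> ` {t0..t1}) (s0, t0) (s1, t1)"
    using connected path_connected_component by blast
  then show ?thesis
    by (rule path_component_of_subset[OF sub])
qed

lemma universal_mountain_if_strict_mono: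
  assumes f: "mountain f" "strict_mono_on {0..1} f"
  shows "universal_mountain f"
  unfolding universal_mountain_def
proof (intro allI impI)
  fix F assume F: "mountain F"
  have "F ` {0..1} \<subseteq> closed_segment (f 0) (f 1)"
    using F f(1) unfolding mountain_def by (simp add: closed_segment_eq_real_ivl)
  then have "path_component (coincidence_set f F) (0, 0) (1, 1)"
    using f F by (intro path_component_coincidence_set_branch) (auto simp: mountain_def)
  then show "\<exists>g1 g2. climbing_pair f F g1 g2"
    by (rule climbing_pair_if_path_component)
qed

section \<open>Hitting times\<close>

lemma first_hit_below:
  fixes F :: "real \<Rightarrow> real"
  assumes "u \<le> v" and F: "continuous_on {u..v} F" and "F u \<le> c" "c \<le> F v"
  obtains x where "x \<in> {u..v}" "F x = c" "\<forall>t\<in>{u..x}. F t \<le> c"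
proof -
  define K where "K = {t \<in> {u..v}. F t = c}"
  have "closed K"
    unfolding K_def using F by (rule continuous_closed_preimage_constant) simp
  moreover have "K \<noteq> {}"
    using IVT'[of F u c v] assms unfolding K_def by auto
  moreover have "bdd_below K"
    unfolding K_def by (rule bdd_belowI[of _ u]) simp
  ultimately have x: "Inf K \<in> K"
    by (rule closed_contains_Inf[rotated -1])
  have "F t \<le> c" if t: "t \<in> {u..Inf K}" for t
  proof (rule ccontr)
    assume "\<not> F t \<le> c"
    moreover have "continuous_on {u..t} F"
      using F by (rule continuous_on_subset) (use t x K_def in auto)
    ultimately obtain t' where "t' \<in> {u..t}" "F t' = c"
      using IVT'[of F u c t] assms t by fastforce
    then have "t' \<in> K"
      using t x unfolding K_def by auto
    then have "Inf K \<le> t'"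
      by (rule cInf_lower) (use \<open>bdd_below K\<close> in blast)
    then have "t' = t"
      using \<open>t' \<in> {u..t}\<close> t by simp
    then show False
      using \<open>F t' = c\<close> \<open>\<not> F t \<le> c\<close> by simp
  qed
  then show thesis
    using that x unfolding K_def by blast
qed

text \<open>Time reversal \<open>t \<mapsto> -t\<close> turns a first hit into a last hit.\<close>
lemma last_hit_above:
  fixes F :: "real \<Rightarrow> real"
  assumes "u \<le> v" and F: "continuous_on {u..v} F" and "F u \<le> c" "c \<le> F v"
  obtains x where "x \<in> {u..v}" "F x = c" "\<forall>t\<in>{x..v}. c \<le> F t"
proof -
  have "continuous_on {-v..-u} (\<lambda>t. - F (- t))"
    by (intro continuous_intros continuous_on_compose2[OF F]) auto
  then obtain x where x: "x \<in> {-v..-u}" "- F (- x) = - c" "\<forall>t\<in>{-v..x}. - F (- t) \<le> - c"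
    using first_hit_below[of "-v" "-u" "\<lambda>t. - F (- t)" "- c"] assms by auto
  have "c \<le> F t" if "t \<in> {- x..v}" for t
    using x(3) that by (metis add.inverse_inverse atLeastAtMost_iff neg_le_iff_le)
  then show thesis
    using that[of "- x"] x(1,2) by simp
qed

lemma first_hit_above:
  fixes F :: "real \<Rightarrow> real"
  assumes "u \<le> v" and F: "continuous_on {u..v} F" and "c \<le> F u" "F v \<le> c"
  obtains x where "x \<in> {u..v}" "F x = c" "\<forall>t\<in>{u..x}. c \<le> F t"
proof -
  have "continuous_on {u..v} (\<lambda>t. - F t)"
    using F by (intro continuous_intros)
  then obtain x where "x \<in> {u..v}" "- F x = - c" "\<forall>t\<in>{u..x}. - F t \<le> - c"
    using first_hit_below[of u v "\<lambda>t. - F t" "- c"] assms by auto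
  then show thesis
    using that by auto
qed

lemma last_hit_below:
  fixes F :: "real \<Rightarrow> real"
  assumes "u \<le> v" and F: "continuous_on {u..v} F" and "c \<le> F u" "F v \<le> c"
  obtains x where "x \<in> {u..v}" "F x = c" "\<forall>t\<in>{x..v}. F t \<le> c"
proof -
  have "continuous_on {u..v} (\<lambda>t. - F t)"
    using F by (intro continuous_intros)
  then obtain x where "x \<in> {u..v}" "- F x = - c" "\<forall>t\<in>{x..v}. - c \<le> - F t"
    using last_hit_above[of u v "\<lambda>t. - F t" "- c"] assms by auto
  then show thesis
    using that by auto
qed

section \<open>Zigzags are universal\<close>

locale zigzag =
  fixes f :: "real \<Rightarrow> real" and p q :: real
  assumes mountain: "mountain f"
    and turning_points: "0 \<le> p" "p \<le> q" "q \<le> 1"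
    and up_left: "strict_mono_on {0..p} f" and down: "strict_antimono_on {p..q} f"
    and up_right: "strict_mono_on {q..1} f" and valley_below_peak: "f q < f p"

locale zigzag_climb = zigzag +
  fixes F :: "real \<Rightarrow> real"
  assumes mountain_F: "mountain F"
begin

definition reachable :: "real \<times> real \<Rightarrow> bool" where
  "reachable z \<longleftrightarrow> path_component (coincidence_set f F) (0, 0) z"

text \<open>The invariant of the climb: at time \<open>\<tau>\<close> the climber on \<open>F\<close> is at most at valley height
  and the climber on \<open>f\<close> is on the first ascent.\<close>
definition checkpoint :: "real \<Rightarrow> bool" where
  "checkpoint \<tau> \<longleftrightarrow> \<tau> \<in> {0..1} \<and> F \<tau> \<le> f q \<and> (\<exists>s\<in>{0..p}. f s = F \<tau> \<and> reachable (s, \<tau>))"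

lemma reachable_trans:
  "reachable z \<Longrightarrow> path_component (coincidence_set f F) z z' \<Longrightarrow> reachable z'"
  unfolding reachable_def by (rule path_component_trans)

lemma reachable_trans_sym:
  "reachable z \<Longrightarrow> path_component (coincidence_set f F) z' z \<Longrightarrow> reachable z'"
  unfolding reachable_def by (blast intro: path_component_trans path_component_sym)

lemma f_range: "s \<in> {0..1} \<Longrightarrow> f s \<in> {0..1}" and F_range: "t \<in> {0..1} \<Longrightarrow> F t \<in> {0..1}"
  using mountain_range[OF mountain] mountain_range[OF mountain_F] by blast+

lemma continuous_on_F: "{t0..t1} \<subseteq> {0..1} \<Longrightarrow> continuous_on {t0..t1} F"
  using mountain_F continuous_on_subset unfolding mountain_def by blast

lemma branch:
  assumes "c \<le> d" "{c..d} \<subseteq> {0..1}" "strict_mono_on {c..d} f \<or> strict_antimono_on {c..d} f"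
    and "0 \<le> t0" "t0 \<le> t1" "t1 \<le> 1" "\<forall>t\<in>{t0..t1}. F t \<in> closed_segment (f c) (f d)"
    and "s0 \<in> {c..d}" "s1 \<in> {c..d}" "f s0 = F t0" "f s1 = F t1"
  shows "path_component (coincidence_set f F) (s0, t0) (s1, t1)"
  using mountain assms unfolding mountain_def
  by (intro path_component_coincidence_set_branch continuous_on_F)
     (auto elim: continuous_on_subset)

lemma branch_left:
  assumes "0 \<le> t0" "t0 \<le> t1" "t1 \<le> 1" "\<forall>t\<in>{t0..t1}. F t \<le> f p"
    and "s0 \<in> {0..p}" "s1 \<in> {0..p}" "f s0 = F t0" "f s1 = F t1"
  shows "path_component (coincidence_set f F) (s0, t0) (s1, t1)"
  using assms turning_points up_left F_range f_range[of p] mountain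
  by (intro branch) (auto simp: closed_segment_eq_real_ivl mountain_def)

lemma branch_middle:
  assumes "0 \<le> t0" "t0 \<le> t1" "t1 \<le> 1" "\<forall>t\<in>{t0..t1}. f q \<le> F t \<and> F t \<le> f p"
    and "s0 \<in> {p..q}" "s1 \<in> {p..q}" "f s0 = F t0" "f s1 = F t1"
  shows "path_component (coincidence_set f F) (s0, t0) (s1, t1)"
  using assms turning_points down valley_below_peak
  by (intro branch) (auto simp: closed_segment_eq_real_ivl)

lemma branch_right:
  assumes "0 \<le> t0" "t0 \<le> t1" "t1 \<le> 1" "\<forall>t\<in>{t0..t1}. f q \<le> F t"
    and "s0 \<in> {q..1}" "s1 \<in> {q..1}" "f s0 = F t0" "f s1 = F t1"
  shows "path_component (coincidence_set f F) (s0, t0) (s1, t1)"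
  using assms turning_points up_right F_range f_range[of q] mountain
  by (intro branch) (auto simp: closed_segment_eq_real_ivl mountain_def)

text \<open>Up the first ascent until \<open>F\<close> first reaches peak height at \<open>x\<close>, then back down the
  middle branch to the last time \<open>\<rho> \<le> x\<close> at valley height.\<close>
lemma climb_to_peak:
  assumes "checkpoint \<tau>"
  obtains x \<rho> where "\<tau> \<le> \<rho>" "\<rho> \<le> x" "x \<le> 1" "F x = f p" "F \<rho> = f q"
    "\<forall>t\<in>{\<rho>..x}. f q \<le> F t" "reachable (q, \<rho>)"
proof -
  obtain s where \<tau>: "\<tau> \<in> {0..1}" "F \<tau> \<le> f q" and s: "s \<in> {0..p}" "f s = F \<tau>" "reachable (s, \<tau>)"
    using assms unfolding checkpoint_def by blast
  have "F \<tau> \<le> f p" "f p \<le> F 1"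
    using \<tau> valley_below_peak f_range[of p] turning_points mountain_F
    by (auto simp: mountain_def)
  then obtain x where x: "x \<in> {\<tau>..1}" "F x = f p" "\<forall>t\<in>{\<tau>..x}. F t \<le> f p"
    using first_hit_below[of \<tau> 1 F "f p"] \<tau>(1) continuous_on_F[of \<tau> 1] by auto
  then have "reachable (p, x)"
    using s \<tau>(1) turning_points by (intro reachable_trans[OF s(3)] branch_left) auto
  obtain \<rho> where \<rho>: "\<rho> \<in> {\<tau>..x}" "F \<rho> = f q" "\<forall>t\<in>{\<rho>..x}. f q \<le> F t"
    using last_hit_above[of \<tau> x F "f q"] x \<tau> valley_below_peak continuous_on_F[of \<tau> x] by auto
  have "path_component (coincidence_set f F) (q, \<rho>) (p, x)"
    using \<rho> x \<tau>(1) turning_points by (intro branch_middle) auto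
  then have "reachable (q, \<rho>)"
    using \<open>reachable (p, x)\<close> by (rule reachable_trans_sym[rotated])
  then show thesis
    using that \<rho> x by auto
qed

text \<open>If \<open>F\<close> drops below valley height again, at time \<open>y\<close> say, the climber on \<open>f\<close> waits
  at the valley until \<open>y\<close>, then is carried up the middle branch (backwards in time) to the last
  peak time \<open>\<rho>'\<close> and down the first ascent to the valley height at time \<open>y\<close>.\<close>
lemma leave_valley:
  assumes "reachable (q, \<rho>)" "0 \<le> \<rho>" "\<rho> \<le> x" "x \<le> 1" "F x = f p" "F \<rho> = f q"
    and above_valley: "\<forall>t\<in>{\<rho>..x}. f q \<le> F t"
  shows "reachable (1, 1) \<or> (\<exists>y. x \<le> y \<and> checkpoint y)"
proof (cases "\<forall>t\<in>{x..1}. f q \<le> F t")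
  case True
  then have "\<forall>t\<in>{\<rho>..1}. f q \<le> F t"
    using above_valley by (metis atLeastAtMost_iff linear)
  then have "path_component (coincidence_set f F) (q, \<rho>) (1, 1)"
    using assms(2-4,6) turning_points mountain mountain_F unfolding mountain_def
    by (intro branch_right) auto
  then show ?thesis
    using assms(1) reachable_trans by blast
next
  case False
  then obtain t1 where t1: "t1 \<in> {x..1}" "F t1 < f q"
    by auto
  then obtain y where y: "y \<in> {x..t1}" "F y = f q" "\<forall>t\<in>{x..y}. f q \<le> F t"
    using first_hit_above[of x t1 F "f q"] assms(2-5) valley_below_peak continuous_on_F[of x t1]
    by auto
  have "\<forall>t\<in>{\<rho>..y}. f q \<le> F t"
    using above_valley y(3) by (metis atLeastAtMost_iff linear)
  then have "path_component (coincidence_set f F) (q, \<rho>) (q, y)"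
    using assms(2-4,6) y t1 turning_points by (intro branch_right) auto
  then have "reachable (q, y)"
    using assms(1) reachable_trans by blast
  obtain \<rho>' where \<rho>': "\<rho>' \<in> {x..y}" "F \<rho>' = f p" "\<forall>t\<in>{\<rho>'..y}. F t \<le> f p"
    using last_hit_below[of x y F "f p"] y assms(2-5) t1 valley_below_peak continuous_on_F[of x y]
    by auto
  have "path_component (coincidence_set f F) (p, \<rho>') (q, y)"
    using \<rho>' y t1 assms(2-4) turning_points by (intro branch_middle) auto
  then have "reachable (p, \<rho>')"
    using \<open>reachable (q, y)\<close> by (rule reachable_trans_sym[rotated])
  have "continuous_on {0..p} f"
    using mountain turning_points unfolding mountain_def by (auto elim: continuous_on_subset)
  then obtain s where s: "s \<in> {0..p}" "f s = f q"
    using IVT'[of f 0 "f q" p] turning_points valley_below_peak f_range[of q] mountain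
    by (auto simp: mountain_def)
  have "path_component (coincidence_set f F) (p, \<rho>') (s, y)"
    using \<rho>' y t1 assms(2-4) s turning_points by (intro branch_left) auto
  then have "checkpoint y"
    using \<open>reachable (p, \<rho>')\<close> reachable_trans s y t1 assms(2-4) unfolding checkpoint_def by auto
  then show ?thesis
    using y by auto
qed

lemma checkpoint_step:
  assumes "checkpoint \<tau>"
  shows "reachable (1, 1) \<or> (\<exists>x y. \<tau> \<le> x \<and> x \<le> y \<and> F x = f p \<and> checkpoint y)"
proof -
  obtain x \<rho> where "\<tau> \<le> \<rho>" "\<rho> \<le> x" "x \<le> 1" "F x = f p" "F \<rho> = f q"
    "\<forall>t\<in>{\<rho>..x}. f q \<le> F t" "reachable (q, \<rho>)"
    using climb_to_peak[OF assms] .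
  moreover have "0 \<le> \<tau>"
    using assms unfolding checkpoint_def by auto
  ultimately show ?thesis
    using leave_valley[of \<rho> x] by force
qed

text \<open>Between a checkpoint and the next peak time \<open>F\<close> rises by \<open>f p - f q\<close>, so by uniform
  continuity each step of the climb advances time by a fixed \<open>\<delta> > 0\<close>.\<close>
lemma reachable_top: "reachable (1, 1)"
proof -
  have "uniformly_continuous_on {0..1} F"
    using mountain_F compact_uniformly_continuous unfolding mountain_def by blast
  then obtain \<delta> where \<delta>: "\<delta> > 0"
    "\<forall>x\<in>{0..1}. \<forall>\<tau>\<in>{0..1}. dist x \<tau> < \<delta> \<longrightarrow> dist (F x) (F \<tau>) < f p - f q"
    using valley_below_peak unfolding uniformly_continuous_on_def by (meson diff_gt_0_iff_gt)
  have advance: "\<tau> + \<delta> \<le> x" if "checkpoint \<tau>" "\<tau> \<le> x" "x \<le> 1" "F x = f p" for \<tau> x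
  proof (rule ccontr)
    assume "\<not> \<tau> + \<delta> \<le> x"
    moreover have "x \<in> {0..1}" "\<tau> \<in> {0..1}"
      using that unfolding checkpoint_def by auto
    ultimately have "dist (F x) (F \<tau>) < f p - f q"
      using \<delta>(2) that(2) by (auto simp: dist_real_def)
    then show False
      using that unfolding checkpoint_def by (auto simp: dist_real_def)
  qed
  have climb: "reachable (1, 1)" if "checkpoint \<tau>" "1 - \<tau> < real m * \<delta>" for m \<tau>
    using that
  proof (induction m arbitrary: \<tau>)
    case 0
    then show ?case
      unfolding checkpoint_def by auto
  next
    case (Suc m)
    show ?case
      using checkpoint_step[OF Suc.prems(1)]
    proof
      assume "\<exists>x y. \<tau> \<le> x \<and> x \<le> y \<and> F x = f p \<and> checkpoint y"
      then obtain x y where "\<tau> \<le> x" "x \<le> y" "F x = f p" "checkpoint y"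
        by blast
      moreover have "y \<le> 1"
        using \<open>checkpoint y\<close> unfolding checkpoint_def by auto
      ultimately have "1 - y < real m * \<delta>"
        using advance[OF Suc.prems(1), of x] Suc.prems(2) by (simp add: algebra_simps)
      then show ?thesis
        using Suc.IH \<open>checkpoint y\<close> by blast
    qed
  qed
  have "reachable (0, 0)"
    using mountain mountain_F unfolding reachable_def mountain_def
    by (intro path_component_refl) (simp add: coincidence_set_def)
  then have "checkpoint 0"
    using mountain mountain_F f_range[of q] turning_points unfolding checkpoint_def
    by (auto simp: mountain_def intro!: bexI[of _ 0])
  moreover obtain m where "1 < real m * \<delta>"
    using ex_less_of_nat_mult[OF \<delta>(1)] by blast
  ultimately show ?thesis
    using climb by simp
qed

end

lemma (in zigzag) universal_mountain: "universal_mountain f"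
  unfolding universal_mountain_def
proof (intro allI impI)
  fix F assume "mountain F"
  then interpret zigzag_climb f p q F
    by unfold_locales
  show "\<exists>g1 g2. climbing_pair f F g1 g2"
    using reachable_top unfolding reachable_def by (rule climbing_pair_if_path_component)
qed

section \<open>Folding away a turn\<close>

lemma continuous_on_Icc_patch:
  fixes g h :: "real \<Rightarrow> 'a::topological_space"
  assumes "a \<le> u" "u \<le> w" "w \<le> b" "continuous_on {a..b} g" "continuous_on {u..w} h"
    and "h u = g u" "h w = g w"
  shows "continuous_on {a..b} (\<lambda>y. if y \<in> {u..w} then h y else g y)"
proof -
  have "continuous_on {a..u} (\<lambda>y. if y \<in> {u..w} then h y else g y)"
    using assms(1-3,6) by (intro continuous_on_eq[OF continuous_on_subset[OF assms(4)]]) auto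
  moreover have "continuous_on {u..w} (\<lambda>y. if y \<in> {u..w} then h y else g y)"
    by (rule continuous_on_eq[OF assms(5)]) auto
  moreover have "continuous_on {w..b} (\<lambda>y. if y \<in> {u..w} then h y else g y)"
    using assms(1-3,7) by (intro continuous_on_eq[OF continuous_on_subset[OF assms(4)]]) auto
  ultimately have "continuous_on ({a..u} \<union> {u..w} \<union> {w..b}) (\<lambda>y. if y \<in> {u..w} then h y else g y)"
    by (intro continuous_on_closed_Un closed_Un closed_atLeastAtMost)
  moreover have "{a..u} \<union> {u..w} \<union> {w..b} = {a..b}"
    using assms(1-3) by auto
  ultimately show ?thesis
    by simp
qed

text \<open>\<open>f = flatten f u w \<circ> folding_map f u w\<close>: the oscillation of \<open>f\<close> on \<open>[u, w]\<close> is moved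
  into the folding map, while \<open>flatten\<close> replaces it by linear interpolation.\<close>
definition flatten :: "(real \<Rightarrow> real) \<Rightarrow> real \<Rightarrow> real \<Rightarrow> real \<Rightarrow> real" where
  "flatten f u w y = (if y \<in> {u..w} then linepath (f u) (f w) ((y - u) / (w - u)) else f y)"

definition folding_map :: "(real \<Rightarrow> real) \<Rightarrow> real \<Rightarrow> real \<Rightarrow> real \<Rightarrow> real" where
  "folding_map f u w s = (if s \<in> {u..w} then linepath u w ((f s - f u) / (f w - f u)) else s)"

lemma linepath_real: "linepath a b t = a + t * (b - a)" for a b t :: real
  by (simp add: linepath_def algebra_simps)

lemma flatten_eq_outside: "u < w \<Longrightarrow> y \<notin> {u<..<w} \<Longrightarrow> flatten f u w y = f y"
  unfolding flatten_def by (auto simp: linepath_0' linepath_1')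

lemma folding_map_eq_outside: "f u \<noteq> f w \<Longrightarrow> s \<notin> {u<..<w} \<Longrightarrow> folding_map f u w s = s"
  unfolding folding_map_def by (auto simp: linepath_0' linepath_1')

lemma flatten_folding_map:
  assumes "u \<le> w" "f u \<noteq> f w" "f ` {u..w} \<subseteq> closed_segment (f u) (f w)"
  shows "folding_map f u w s \<in> {u..w} \<longleftrightarrow> s \<in> {u..w}" "flatten f u w (folding_map f u w s) = f s"
proof -
  have "folding_map f u w s \<in> {u..w} \<and> flatten f u w (folding_map f u w s) = f s" if s: "s \<in> {u..w}"
  proof -
    obtain r where r: "r \<in> {0..1}" "f s = linepath (f u) (f w) r"
      using assms(3) s unfolding linepath_image_01[symmetric] by blast
    then have "folding_map f u w s = linepath u w r"
      using s assms(2) unfolding folding_map_def by (simp add: linepath_real)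
    moreover have "linepath u w r \<in> {u..w}"
      using linepath_in_path[OF r(1), of u w] assms(1) by (simp add: closed_segment_eq_real_ivl)
    moreover have "flatten f u w (linepath u w r) = f s"
      using calculation(2) r s unfolding flatten_def by (cases "u = w") (auto simp: linepath_real)
    ultimately show ?thesis
      by simp
  qed
  moreover have "folding_map f u w s = s" "flatten f u w s = f s" if "s \<notin> {u..w}"
    using that unfolding folding_map_def flatten_def by auto
  ultimately show "folding_map f u w s \<in> {u..w} \<longleftrightarrow> s \<in> {u..w}"
    "flatten f u w (folding_map f u w s) = f s"
    by (cases "s \<in> {u..w}"; simp)+
qed

lemma mountain_folding_map:
  assumes "continuous_on {u..w} f" "0 \<le> u" "u \<le> w" "w \<le> 1" "f u \<noteq> f w"
    and "f ` {u..w} \<subseteq> closed_segment (f u) (f w)"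
  shows "mountain (folding_map f u w)"
proof -
  have "continuous_on {0..1} (folding_map f u w)"
    unfolding folding_map_def[abs_def] linepath_real using assms(1-5)
    by (intro continuous_on_Icc_patch continuous_intros) auto
  moreover have "folding_map f u w s \<in> {0..1}" if "s \<in> {0..1}" for s
    using flatten_folding_map(1)[OF assms(3,5,6), of s] that assms(2,4)
    by (cases "s \<in> {u..w}") (auto simp: folding_map_def)
  moreover have "folding_map f u w 0 = 0" "folding_map f u w 1 = 1"
    using assms(2,4,5) by (auto intro!: folding_map_eq_outside)
  ultimately show ?thesis
    unfolding mountain_def by auto
qed

lemma mountain_flatten:
  assumes "mountain f" "0 \<le> u" "u < w" "w \<le> 1"
  shows "mountain (flatten f u w)"
proof -
  have f: "continuous_on {0..1} f" "f ` {0..1} \<subseteq> {0..1}"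
    using assms(1) unfolding mountain_def by auto
  have "continuous_on {0..1} (flatten f u w)"
    unfolding flatten_def[abs_def] linepath_real using assms(2-4) f(1)
    by (intro continuous_on_Icc_patch continuous_intros) auto
  moreover have "flatten f u w y \<in> f ` {u..w}" if "y \<in> {u..w}" for y
  proof -
    have "(y - u) / (w - u) \<in> {0..1}"
      using that assms(3) by auto
    then have "flatten f u w y \<in> closed_segment (f u) (f w)"
      using that linepath_in_path[of "(y - u) / (w - u)" "f u" "f w"] by (simp add: flatten_def)
    moreover have "continuous_on (closed_segment u w) f"
      using f(1) assms(2-4) closed_segment_eq_real_ivl by (auto elim: continuous_on_subset)
    ultimately show ?thesis
      using IVT'_closed_segment_real[of _ f u w] assms(3) closed_segment_eq_real_ivl by force
  qed
  then have "flatten f u w y \<in> f ` {0..1}" if "y \<in> {0..1}" for y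
    using that image_mono[of "{u..w}" "{0..1}" f] assms(2-4)
    by (cases "y \<in> {u..w}") (auto simp: flatten_def)
  then have "flatten f u w ` {0..1} \<subseteq> {0..1}"
    using f(2) by blast
  moreover have "flatten f u w 0 = 0" "flatten f u w 1 = 1"
    using assms by (auto simp: flatten_eq_outside mountain_def)
  ultimately show ?thesis
    unfolding mountain_def by auto
qed

lemma folding_map_less_iff:
  assumes "s \<in> {u..w}" "t \<in> {u..w}" "u < w" "f u < f w"
  shows "folding_map f u w s < folding_map f u w t \<longleftrightarrow> f s < f t"
  using assms by (simp add: folding_map_def linepath_real divide_less_cancel)

lemma strict_mono_on_folding_map:
  "S \<subseteq> {u..w} \<Longrightarrow> u < w \<Longrightarrow> f u < f w \<Longrightarrow> strict_mono_on S f \<Longrightarrow>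
    strict_mono_on S (folding_map f u w)"
  using folding_map_less_iff[where f = f and u = u and w = w] unfolding monotone_on_def by blast

lemma strict_antimono_on_folding_map:
  "S \<subseteq> {u..w} \<Longrightarrow> u < w \<Longrightarrow> f u < f w \<Longrightarrow> strict_antimono_on S f \<Longrightarrow>
    strict_antimono_on S (folding_map f u w)"
  using folding_map_less_iff[where f = f and u = u and w = w] unfolding monotone_on_def by blast

lemma folding_map_uminus: "folding_map (\<lambda>s. - f s) u w = folding_map f u w"
  by (rule ext) (simp only: folding_map_def minus_diff_minus minus_divide_divide)

lemma flatten_uminus: "flatten (\<lambda>s. - f s) u w = (\<lambda>y. - flatten f u w y)"
  by (simp add: flatten_def fun_eq_iff linepath_def)

lemma fold_range:
  fixes f :: "real \<Rightarrow> real"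
  assumes "X0 \<le> u" "u \<le> X1" "X1 \<le> X2" "X2 \<le> w" "w \<le> X3"
    and "strict_mono_on {X0..X1} f \<or> strict_antimono_on {X0..X1} f"
      "strict_mono_on {X1..X2} f \<or> strict_antimono_on {X1..X2} f"
      "strict_mono_on {X2..X3} f \<or> strict_antimono_on {X2..X3} f"
    and "f u = f X2" "f w = f X1"
  shows "f ` {u..w} \<subseteq> closed_segment (f u) (f w)"
proof
  fix y assume "y \<in> f ` {u..w}"
  then obtain s where s: "s \<in> {u..w}" "y = f s"
    by blast
  have "{u..X1} \<subseteq> {X0..X1}" "{X2..w} \<subseteq> {X2..X3}"
    using assms(1,5) by auto
  then have pieces: "strict_mono_on {u..X1} f \<or> strict_antimono_on {u..X1} f"
    "strict_mono_on {X2..w} f \<or> strict_antimono_on {X2..w} f"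
    using assms(6,8) monotone_on_subset by blast+
  consider "s \<le> X1" | "X1 \<le> s" "s \<le> X2" | "X2 \<le> s"
    by linarith
  then show "y \<in> closed_segment (f u) (f w)"
  proof cases
    case 1
    then show ?thesis
      using strict_monotone_on_in_segment[OF pieces(1), of s] s assms(10) by simp
  next
    case 2
    then show ?thesis
      using strict_monotone_on_in_segment[OF assms(7), of s] s assms(9,10)
      by (simp add: closed_segment_commute)
  next
    case 3
    then show ?thesis
      using strict_monotone_on_in_segment[OF pieces(2), of s] s assms(9) by simp
  qed
qed

lemma strict_mono_on_flatten: "u < w \<Longrightarrow> f u < f w \<Longrightarrow> strict_mono_on {u..w} (flatten f u w)"
  by (rule monotone_onI)
     (auto simp: flatten_def linepath_real intro!: mult_strict_right_mono divide_strict_right_mono)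

lemma fold_up_down_up:
  fixes f :: "real \<Rightarrow> real"
  assumes pts: "X0 \<le> u" "u \<le> X1" "X1 < X2" "X2 \<le> w" "w \<le> X3"
    and up1: "strict_mono_on {X0..X1} f" and down: "strict_antimono_on {X1..X2} f"
    and up2: "strict_mono_on {X2..X3} f"
    and "f u = f X2" "f w = f X1"
  shows "strict_mono_on {X0..X3} (flatten f u w)"
    and "strict_mono_on {u..X1} (folding_map f u w)"
    and "strict_antimono_on {X1..X2} (folding_map f u w)"
    and "strict_mono_on {X2..w} (folding_map f u w)"
proof -
  have "u < w"
    using pts by simp
  have "f u < f w"
    using monotone_onD[OF down, of X1 X2] pts assms(9,10) by simp
  have "transp ((<) :: real \<Rightarrow> real \<Rightarrow> bool)"
    by (auto intro: transpI)
  moreover have "strict_mono_on {X0..u} (flatten f u w)"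
    using monotone_on_subset[OF up1, of "{X0..u}"] flatten_eq_outside[OF \<open>u < w\<close>] pts
      monotone_on_cong[of "{X0..u}" "flatten f u w" f]
    by auto
  moreover have "strict_mono_on {w..X3} (flatten f u w)"
    using monotone_on_subset[OF up2, of "{w..X3}"] flatten_eq_outside[OF \<open>u < w\<close>] pts
      monotone_on_cong[of "{w..X3}" "flatten f u w" f]
    by auto
  ultimately show "strict_mono_on {X0..X3} (flatten f u w)"
    using strict_mono_on_flatten[OF \<open>u < w\<close> \<open>f u < f w\<close>] monotone_on_Icc_join by blast
  show "strict_mono_on {u..X1} (folding_map f u w)" "strict_mono_on {X2..w} (folding_map f u w)"
    using pts \<open>f u < f w\<close> monotone_on_subset[OF up1] monotone_on_subset[OF up2]
    by (auto intro!: strict_mono_on_folding_map)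
  show "strict_antimono_on {X1..X2} (folding_map f u w)"
    using pts \<open>f u < f w\<close> down by (auto intro!: strict_antimono_on_folding_map)
qed

lemma fold_down_up_down:
  fixes f :: "real \<Rightarrow> real"
  assumes "X0 \<le> u" "u \<le> X1" "X1 < X2" "X2 \<le> w" "w \<le> X3"
    and "strict_antimono_on {X0..X1} f" "strict_mono_on {X1..X2} f" "strict_antimono_on {X2..X3} f"
    and "f u = f X2" "f w = f X1"
  shows "strict_antimono_on {X0..X3} (flatten f u w)"
    and "strict_mono_on {u..X1} (folding_map f u w)"
    and "strict_antimono_on {X1..X2} (folding_map f u w)"
    and "strict_mono_on {X2..w} (folding_map f u w)"
  using fold_up_down_up[of X0 u X1 X2 w X3 "\<lambda>s. - f s"] assms
  by (simp_all add: strict_mono_on_uminus_iff strict_antimono_on_uminus_iff flatten_uminus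
      folding_map_uminus)

lemma zigzag_folding_map:
  fixes f :: "real \<Rightarrow> real"
  assumes pts: "0 \<le> u" "u \<le> X1" "X1 < X2" "X2 \<le> w" "w \<le> 1"
    and "continuous_on {u..w} f" "f u \<noteq> f w" "f u = f X2" "f w = f X1"
    and "f ` {u..w} \<subseteq> closed_segment (f u) (f w)"
    and shape: "strict_mono_on {u..X1} (folding_map f u w)"
      "strict_antimono_on {X1..X2} (folding_map f u w)"
      "strict_mono_on {X2..w} (folding_map f u w)"
  shows "zigzag (folding_map f u w) X1 X2"
proof
  show "mountain (folding_map f u w)"
    using assms(6,7,10) pts by (intro mountain_folding_map) auto
  have id: "folding_map f u w s = s" if "s \<le> u \<or> w \<le> s" for s
    using that assms(7) by (intro folding_map_eq_outside) auto
  have "transp ((<) :: real \<Rightarrow> real \<Rightarrow> bool)"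
    by (auto intro: transpI)
  moreover have "strict_mono_on {0..u} (folding_map f u w)"
    "strict_mono_on {w..1} (folding_map f u w)"
    using id strict_mono_on_ident monotone_on_cong[of "{0..u}" "folding_map f u w" "\<lambda>s. s"]
      monotone_on_cong[of "{w..1}" "folding_map f u w" "\<lambda>s. s"] by auto
  ultimately show "strict_mono_on {0..X1} (folding_map f u w)"
    "strict_mono_on {X2..1} (folding_map f u w)"
    using shape monotone_on_Icc_join by blast+
  have "folding_map f u w X2 = u" "folding_map f u w X1 = w"
    using pts assms(7-9) by (simp_all add: folding_map_def linepath_0' linepath_1')
  then show "folding_map f u w X2 < folding_map f u w X1"
    using pts by simp
qed (use pts shape in auto)

lemma fold_short_turn:
  fixes f :: "real \<Rightarrow> real"
  assumes f: "mountain f" and pts: "0 \<le> X0" "X0 < X1" "X1 < X2" "X2 < X3" "X3 \<le> 1"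
    and turn:
      "(strict_mono_on {X0..X1} f \<and> strict_antimono_on {X1..X2} f \<and> strict_mono_on {X2..X3} f) \<or>
       (strict_antimono_on {X0..X1} f \<and> strict_mono_on {X1..X2} f \<and> strict_antimono_on {X2..X3} f)"
    and short: "\<bar>f X2 - f X1\<bar> \<le> \<bar>f X1 - f X0\<bar>" "\<bar>f X2 - f X1\<bar> \<le> \<bar>f X3 - f X2\<bar>"
  obtains u w where "X0 \<le> u" "u < w" "w \<le> X3" "mountain (flatten f u w)"
    "strict_mono_on {X0..X3} (flatten f u w) \<or> strict_antimono_on {X0..X3} (flatten f u w)"
    "zigzag (folding_map f u w) X1 X2" "\<And>s. f s = flatten f u w (folding_map f u w s)"
proof -
  have pieces: "strict_mono_on {X0..X1} f \<or> strict_antimono_on {X0..X1} f"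
    "strict_mono_on {X1..X2} f \<or> strict_antimono_on {X1..X2} f"
    "strict_mono_on {X2..X3} f \<or> strict_antimono_on {X2..X3} f"
    using turn by auto
  have step_values:
    "f X0 < f X1 \<and> f X2 < f X1 \<and> f X2 < f X3 \<or> f X1 < f X0 \<and> f X1 < f X2 \<and> f X3 < f X2"
    using turn pts monotone_onD[of "{X0..X1}" "(<)" _ f X0 X1]
      monotone_onD[of "{X1..X2}" "(<)" _ f X1 X2] monotone_onD[of "{X2..X3}" "(<)" _ f X2 X3]
    by (elim disjE conjE) auto
  then have "f X2 \<in> closed_segment (f X0) (f X1)" "f X1 \<in> closed_segment (f X2) (f X3)"
    using short by (auto simp: closed_segment_eq_real_ivl)
  moreover have "continuous_on (closed_segment X0 X1) f" "continuous_on (closed_segment X2 X3) f"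
    using f pts unfolding mountain_def
    by (auto simp: closed_segment_eq_real_ivl elim!: continuous_on_subset)
  ultimately obtain u w where u: "u \<in> {X0..X1}" "f u = f X2" and w: "w \<in> {X2..X3}" "f w = f X1"
    using IVT'_closed_segment_real[of "f X2" f X0 X1] IVT'_closed_segment_real[of "f X1" f X2 X3]
      pts
    by (auto simp: closed_segment_eq_real_ivl)
  have "f u \<noteq> f w"
    using step_values u(2) w(2) by auto
  have range: "f ` {u..w} \<subseteq> closed_segment (f u) (f w)"
    using u w pts pieces by (intro fold_range[of X0 u X1 X2 w X3]) auto
  have shape:
    "(strict_mono_on {X0..X3} (flatten f u w) \<or> strict_antimono_on {X0..X3} (flatten f u w)) \<and>
      strict_mono_on {u..X1} (folding_map f u w) \<and> strict_antimono_on {X1..X2} (folding_map f u w) \<and>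
      strict_mono_on {X2..w} (folding_map f u w)"
    using turn fold_up_down_up[of X0 u X1 X2 w X3 f] fold_down_up_down[of X0 u X1 X2 w X3 f] u w pts
    by auto
  have "zigzag (folding_map f u w) X1 X2"
    using u w pts \<open>f u \<noteq> f w\<close> range shape f unfolding mountain_def
    by (intro zigzag_folding_map) (auto elim: continuous_on_subset)
  moreover have "mountain (flatten f u w)"
    using f u w pts by (intro mountain_flatten) auto
  moreover have "f s = flatten f u w (folding_map f u w s)" for s
    using flatten_folding_map(2)[OF _ \<open>f u \<noteq> f w\<close> range] u w pts by simp
  ultimately show thesis
    using that[of u w] u w pts shape by auto
qed

section \<open>Piecewise monotone mountains\<close>

definition monotone_partition :: "(real \<Rightarrow> real) \<Rightarrow> nat \<Rightarrow> (nat \<Rightarrow> real) \<Rightarrow> bool" where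
  "monotone_partition f n x \<longleftrightarrow> x 0 = 0 \<and> x n = 1 \<and> (\<forall>i<n. x i < x (Suc i)) \<and>
     (\<forall>i<n. strict_mono_on {x i..x (Suc i)} f \<or> strict_antimono_on {x i..x (Suc i)} f)"

lemma monotone_partition_if_piecewise_monotone:
  "piecewise_monotone f \<Longrightarrow> \<exists>n x. monotone_partition f n x"
  unfolding piecewise_monotone_def monotone_partition_def by blast

lemma monotone_partition_less:
  assumes "monotone_partition f n x" "i < j" "j \<le> n"
  shows "x i < x j"
proof -
  have "\<And>i. i \<in> {..<n} \<Longrightarrow> x i < x (Suc i)"
    using assms(1) unfolding monotone_partition_def by auto
  moreover have "{i..<j} \<subseteq> {..<n}"
    using assms(3) by auto
  ultimately show ?thesis
    using lift_Suc_mono_less_ivl[of "{..<n}" x i j] assms(2) by blast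
qed

lemma monotone_partition_le:
  assumes "monotone_partition f n x" "i \<le> j" "j \<le> n"
  shows "x i \<le> x j"
  using monotone_partition_less[OF assms(1)] assms(2,3) by (cases "i = j") (auto intro: less_imp_le)

lemma monotone_partition_range:
  assumes "monotone_partition f n x" "i \<le> n"
  shows "x i \<in> {0..1}"
  using monotone_partition_le[OF assms(1), of 0 i] monotone_partition_le[OF assms(1), of i n] assms
  unfolding monotone_partition_def by auto

text \<open>Deleting the partition points strictly between \<open>x k\<close> and \<open>x (k + j + 1)\<close>.\<close>
lemma monotone_partition_contract:
  assumes P: "monotone_partition f n x" and "k + j < n"
    and g_eq: "\<And>s. s \<le> x k \<or> x (Suc (k + j)) \<le> s \<Longrightarrow> g s = f s"
    and g_piece:
      "strict_mono_on {x k..x (Suc (k + j))} g \<or> strict_antimono_on {x k..x (Suc (k + j))} g"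
  shows "monotone_partition g (n - j) (\<lambda>i. if i \<le> k then x i else x (i + j))"
proof -
  define y where "y = (\<lambda>i. if i \<le> k then x i else x (i + j))"
  have pieces: "strict_mono_on {x i..x (Suc i)} f \<or> strict_antimono_on {x i..x (Suc i)} f"
    if "i < n" for i
    using P that unfolding monotone_partition_def by blast
  have "y i < y (Suc i) \<and>
      (strict_mono_on {y i..y (Suc i)} g \<or> strict_antimono_on {y i..y (Suc i)} g)"
    if "i < n - j" for i
  proof (cases i k rule: linorder_cases)
    case less
    then have y: "y i = x i" "y (Suc i) = x (Suc i)" and "i < n"
      using \<open>k + j < n\<close> unfolding y_def by auto
    have "x (Suc i) \<le> x k"
      using monotone_partition_le[OF P, of "Suc i" k] less \<open>k + j < n\<close> by simp
    then have "monotone_on {x i..x (Suc i)} (<) ord g \<longleftrightarrow>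
        monotone_on {x i..x (Suc i)} (<) ord f" for ord
      using g_eq by (intro monotone_on_cong) auto
    moreover have "x i < x (Suc i)"
      using P \<open>i < n\<close> unfolding monotone_partition_def by blast
    ultimately show ?thesis
      unfolding y using pieces[OF \<open>i < n\<close>] by simp
  next
    case equal
    then show ?thesis
      using g_piece monotone_partition_less[OF P, of k "Suc (k + j)"] \<open>k + j < n\<close>
      unfolding y_def by auto
  next
    case greater
    then have y: "y i = x (i + j)" "y (Suc i) = x (Suc (i + j))" and "i + j < n"
      using that unfolding y_def by auto
    have "x (Suc (k + j)) \<le> x (i + j)"
      using monotone_partition_le[OF P, of "Suc (k + j)" "i + j"] greater \<open>i + j < n\<close> by simp
    then have "monotone_on {x (i + j)..x (Suc (i + j))} (<) ord g \<longleftrightarrow>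
        monotone_on {x (i + j)..x (Suc (i + j))} (<) ord f" for ord
      using g_eq by (intro monotone_on_cong) auto
    moreover have "x (i + j) < x (Suc (i + j))"
      using P \<open>i + j < n\<close> unfolding monotone_partition_def by blast
    ultimately show ?thesis
      unfolding y using pieces[OF \<open>i + j < n\<close>] by simp
  qed
  moreover have "y 0 = 0" "y (n - j) = 1"
    using P \<open>k + j < n\<close> unfolding y_def monotone_partition_def by auto
  ultimately show ?thesis
    unfolding monotone_partition_def y_def by blast
qed

lemma monotone_partition_merge:
  assumes P: "monotone_partition f n x" and "Suc k < n"
    and same: "(strict_mono_on {x k..x (Suc k)} f \<and> strict_mono_on {x (Suc k)..x (Suc (Suc k))} f) \<or>
      (strict_antimono_on {x k..x (Suc k)} f \<and> strict_antimono_on {x (Suc k)..x (Suc (Suc k))} f)"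
  shows "monotone_partition f (n - 1) (\<lambda>i. if i \<le> k then x i else x (i + 1))"
proof (rule monotone_partition_contract[OF P])
  have "transp ((<) :: real \<Rightarrow> _ )" "transp (\<lambda>a b :: real. b < a)"
    by (auto intro: transpI)
  then have "strict_mono_on {x k..x (Suc (Suc k))} f \<or> strict_antimono_on {x k..x (Suc (Suc k))} f"
    using same monotone_on_Icc_join[of "x k" "x (Suc k)" _ f "x (Suc (Suc k))"] by blast
  then show "strict_mono_on {x k..x (Suc (k + 1))} f \<or> strict_antimono_on {x k..x (Suc (k + 1))} f"
    by simp
qed (use \<open>Suc k < n\<close> in auto)

text \<open>In a walk from \<open>0\<close> to \<open>1\<close> inside \<open>[0, 1]\<close> whose steps alternate in direction,
  a shortest interior step is no longer than its two neighbours; at the ends this uses that the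
  first and last steps go up.\<close>
lemma alternating_walk_short_step:
  fixes v :: "nat \<Rightarrow> real"
  assumes "2 \<le> n" "v 0 = 0" "v n = 1" "\<forall>i\<le>n. v i \<in> {0..1}" "\<forall>i<n. v i \<noteq> v (Suc i)"
    and turns: "\<forall>i. Suc i < n \<longrightarrow> (v i < v (Suc i) \<longleftrightarrow> v (Suc (Suc i)) < v (Suc i))"
  shows "\<exists>k. k + 3 \<le> n \<and> \<bar>v (Suc (Suc k)) - v (Suc k)\<bar> \<le> \<bar>v (Suc k) - v k\<bar> \<and>
    \<bar>v (Suc (Suc k)) - v (Suc k)\<bar> \<le> \<bar>v (Suc (Suc (Suc k))) - v (Suc (Suc k))\<bar>"
proof -
  define L where "L i = \<bar>v (Suc i) - v i\<bar>" for i
  define K where "K = {k. k + 3 \<le> n}"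
  have "v 1 \<in> {0..1}" "v 0 \<noteq> v 1" "v (n - 1) \<in> {0..1}" "v (n - 1) \<noteq> v n"
    using assms(1,4,5) spec[OF assms(5), of "n - 1"] by auto
  then have first_up: "v 0 < v 1" and last_up: "v (n - 1) < v n"
    using assms(2,3) by auto
  have "n \<noteq> 2"
    using turns[rule_format, of 0] first_up last_up assms(2,3) by (auto simp: numeral_2_eq_2)
  then have "0 \<in> K"
    using \<open>2 \<le> n\<close> unfolding K_def by simp
  then have "K \<noteq> {}"
    by blast
  have "finite K"
    unfolding K_def by (rule finite_subset[of _ "{..n}"]) auto
  define k where "k = arg_min_on (\<lambda>k. L (Suc k)) K"
  have k: "k + 3 \<le> n" "\<And>k'. k' + 3 \<le> n \<Longrightarrow> L (Suc k) \<le> L (Suc k')"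
    using arg_min_if_finite[OF \<open>finite K\<close> \<open>K \<noteq> {}\<close>, of "\<lambda>k. L (Suc k)"]
    unfolding k_def K_def by (auto simp: not_less)
  have "L (Suc k) \<le> L k"
  proof (cases k)
    case 0
    have "v (Suc (Suc 0)) < v (Suc 0)" "0 \<le> v (Suc (Suc 0))"
      using first_up turns[rule_format, of 0] assms(4)[rule_format, of "Suc (Suc 0)"] k(1) 0 by auto
    then show ?thesis
      using first_up assms(2) 0 unfolding L_def by simp
  next
    case (Suc k')
    then show ?thesis
      using k by auto
  qed
  moreover have "L (Suc k) \<le> L (Suc (Suc k))"
  proof (cases "k + 4 \<le> n")
    case True
    then show ?thesis
      using k(2)[of "Suc k"] by simp
  next
    case False
    then have "n = k + 3"
      using k(1) by simp
    then have "v (Suc (Suc k)) < v (Suc (Suc (Suc k)))" "v (Suc (Suc (Suc k))) = 1"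
      using last_up assms(3) by (simp_all add: numeral_3_eq_3)
    moreover have "v (Suc k) \<noteq> v (Suc (Suc k))" "v (Suc k) \<le> 1"
      using assms(4,5) \<open>n = k + 3\<close> by auto
    ultimately show ?thesis
      using turns[rule_format, of "Suc k"] \<open>n = k + 3\<close> unfolding L_def by auto
  qed
  ultimately show ?thesis
    using k(1) unfolding L_def by (intro exI[of _ k] conjI)
qed

lemma monotone_partition_piece_iff:
  assumes "monotone_partition f n x" "i < n"
  shows "strict_mono_on {x i..x (Suc i)} f \<longleftrightarrow> f (x i) < f (x (Suc i))"
    and "strict_antimono_on {x i..x (Suc i)} f \<longleftrightarrow> f (x (Suc i)) < f (x i)"
proof -
  have "x i < x (Suc i)"
    and piece: "strict_mono_on {x i..x (Suc i)} f \<or> strict_antimono_on {x i..x (Suc i)} f"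
    using assms unfolding monotone_partition_def by auto
  then have "strict_mono_on {x i..x (Suc i)} f \<Longrightarrow> f (x i) < f (x (Suc i))"
    "strict_antimono_on {x i..x (Suc i)} f \<Longrightarrow> f (x (Suc i)) < f (x i)"
    using monotone_onD[of "{x i..x (Suc i)}" "(<)" _ f "x i" "x (Suc i)"] by auto
  then show "strict_mono_on {x i..x (Suc i)} f \<longleftrightarrow> f (x i) < f (x (Suc i))"
    "strict_antimono_on {x i..x (Suc i)} f \<longleftrightarrow> f (x (Suc i)) < f (x i)"
    using piece by auto
qed

lemma monotone_partition_fold_turn:
  assumes f: "mountain f" and P: "monotone_partition f n x" and "2 \<le> n"
    and alternating: "\<And>i. Suc i < n \<Longrightarrow>
      strict_mono_on {x i..x (Suc i)} f \<longleftrightarrow> strict_antimono_on {x (Suc i)..x (Suc (Suc i))} f"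
  obtains g y Z p q where "mountain g" "monotone_partition g (n - 2) y" "zigzag Z p q"
    "\<And>s. f s = g (Z s)"
proof -
  define v where "v i = f (x i)" for i
  have up_iff: "strict_mono_on {x i..x (Suc i)} f \<longleftrightarrow> v i < v (Suc i)"
    and down_iff: "strict_antimono_on {x i..x (Suc i)} f \<longleftrightarrow> v (Suc i) < v i" if "i < n" for i
    using monotone_partition_piece_iff[OF P that] unfolding v_def by auto
  have steps: "v i \<noteq> v (Suc i)" if "i < n" for i
    using P that up_iff[OF that] down_iff[OF that] unfolding monotone_partition_def by auto
  have turns: "v i < v (Suc i) \<longleftrightarrow> v (Suc (Suc i)) < v (Suc i)" if "Suc i < n" for i
    using alternating[OF that] up_iff[of i] down_iff[of "Suc i"] that by simp
  have "v 0 = 0" "v n = 1" "\<forall>i\<le>n. v i \<in> {0..1}"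
    using f P mountain_range[OF f] monotone_partition_range[OF P]
    unfolding v_def monotone_partition_def mountain_def by auto
  then obtain k where k: "k + 3 \<le> n"
    "\<bar>v (Suc (Suc k)) - v (Suc k)\<bar> \<le> \<bar>v (Suc k) - v k\<bar>"
    "\<bar>v (Suc (Suc k)) - v (Suc k)\<bar> \<le> \<bar>v (Suc (Suc (Suc k))) - v (Suc (Suc k))\<bar>"
    using alternating_walk_short_step[OF \<open>2 \<le> n\<close>] steps turns by blast
  have "v k < v (Suc k) \<and> v (Suc (Suc k)) < v (Suc k) \<and> v (Suc (Suc k)) < v (Suc (Suc (Suc k))) \<or>
      v (Suc k) < v k \<and> v (Suc k) < v (Suc (Suc k)) \<and> v (Suc (Suc (Suc k))) < v (Suc (Suc k))"
    using turns[of k] turns[of "Suc k"] steps[of k] steps[of "Suc k"] steps[of "Suc (Suc k)"] k(1)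
    by auto
  then have "(strict_mono_on {x k..x (Suc k)} f \<and> strict_antimono_on {x (Suc k)..x (Suc (Suc k))} f \<and>
        strict_mono_on {x (Suc (Suc k))..x (Suc (Suc (Suc k)))} f) \<or>
      (strict_antimono_on {x k..x (Suc k)} f \<and> strict_mono_on {x (Suc k)..x (Suc (Suc k))} f \<and>
        strict_antimono_on {x (Suc (Suc k))..x (Suc (Suc (Suc k)))} f)"
    using up_iff down_iff k(1) by simp
  moreover have "0 \<le> x k" "x (Suc (Suc (Suc k))) \<le> 1"
    using monotone_partition_range[OF P] k(1) by auto
  moreover have "x k < x (Suc k)" "x (Suc k) < x (Suc (Suc k))"
    "x (Suc (Suc k)) < x (Suc (Suc (Suc k)))"
    using P k(1) unfolding monotone_partition_def by auto
  ultimately obtain u w where uw: "x k \<le> u" "u < w" "w \<le> x (Suc (Suc (Suc k)))"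
    "mountain (flatten f u w)"
    "strict_mono_on {x k..x (Suc (Suc (Suc k)))} (flatten f u w) \<or>
      strict_antimono_on {x k..x (Suc (Suc (Suc k)))} (flatten f u w)"
    "zigzag (folding_map f u w) (x (Suc k)) (x (Suc (Suc k)))"
    "\<And>s. f s = flatten f u w (folding_map f u w s)"
    using fold_short_turn[OF f] k(2,3) unfolding v_def by metis
  have "monotone_partition (flatten f u w) (n - 2) (\<lambda>i. if i \<le> k then x i else x (i + 2))"
    using uw k(1) flatten_eq_outside[OF uw(2)]
    by (intro monotone_partition_contract[OF P]) (auto simp: numeral_2_eq_2)
  then show thesis
    using that uw(4,6,7) by blast
qed

theorem universal_mountain_if_monotone_partition:
  "mountain f \<Longrightarrow> monotone_partition f n x \<Longrightarrow> universal_mountain f"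
proof (induction n arbitrary: f x rule: less_induct)
  case (less n f x)
  have "n \<noteq> 0"
    using less.prems(2) unfolding monotone_partition_def by (cases n) auto
  have pieces: "strict_mono_on {x i..x (Suc i)} f \<or> strict_antimono_on {x i..x (Suc i)} f"
    if "i < n" for i
    using less.prems(2) that unfolding monotone_partition_def by blast
  consider (merge) k where "Suc k < n"
      "\<not> (strict_mono_on {x k..x (Suc k)} f \<longleftrightarrow> strict_antimono_on {x (Suc k)..x (Suc (Suc k))} f)"
    | (single) "n = 1"
    | (alternating) "2 \<le> n" "\<And>i. Suc i < n \<Longrightarrow>
        strict_mono_on {x i..x (Suc i)} f \<longleftrightarrow> strict_antimono_on {x (Suc i)..x (Suc (Suc i))} f"
  proof (cases "\<exists>k. Suc k < n \<and>
      \<not> (strict_mono_on {x k..x (Suc k)} f \<longleftrightarrow> strict_antimono_on {x (Suc k)..x (Suc (Suc k))} f)")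
    case False
    then show thesis
      using that(2,3) \<open>n \<noteq> 0\<close> by (cases "n = 1") auto
  qed (use that(1) in blast)
  then show ?case
  proof cases
    case merge
    then have "monotone_partition f (n - 1) (\<lambda>i. if i \<le> k then x i else x (i + 1))"
      using pieces[of k] pieces[of "Suc k"]
      by (intro monotone_partition_merge[OF less.prems(2)]) auto
    then show ?thesis
      using less.IH[of "n - 1"] less.prems(1) merge(1) by auto
  next
    case single
    then show ?thesis
      using less.prems monotone_partition_piece_iff[OF less.prems(2), of 0]
      unfolding monotone_partition_def mountain_def
      by (auto intro!: universal_mountain_if_strict_mono simp: mountain_def)
  next
    case alternating
    then obtain g y Z p q where g: "mountain g" "monotone_partition g (n - 2) y"
      and "zigzag Z p q" and f_eq: "\<And>s. f s = g (Z s)"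
      using monotone_partition_fold_turn[OF less.prems] by blast
    have "universal_mountain g"
      using less.IH[of "n - 2"] g alternating(1) by auto
    moreover have "universal_mountain Z"
      using \<open>zigzag Z p q\<close> by (rule zigzag.universal_mountain)
    ultimately show ?thesis
      by (rule universal_mountain_comp) (simp add: f_eq)
  qed
qed

theorem theorem3:
  fixes f1 f2 :: "real \<Rightarrow> real"
  assumes "continuous_on {0..1} f1" and "f1 ` {0..1} \<subseteq> {0..1}"
    and "continuous_on {0..1} f2" and "f2 ` {0..1} \<subseteq> {0..1}"
    and "f1 0 = 0" and "f2 0 = 0" and "f1 1 = 1" and "f2 1 = 1"
    and "f1 \<in> class_U"
  shows "\<exists>g1 g2 :: real \<Rightarrow> real.
           continuous_on {0..1} g1 \<and> g1 ` {0..1} \<subseteq> {0..1} \<and>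
           continuous_on {0..1} g2 \<and> g2 ` {0..1} \<subseteq> {0..1} \<and>
           g1 0 = 0 \<and> g2 0 = 0 \<and> g1 1 = 1 \<and> g2 1 = 1 \<and>
           (\<forall>t\<in>{0..1}. f1 (g1 t) = f2 (g2 t))"
proof -
  have "mountain f1" "mountain f2"
    using assms(1-8) unfolding mountain_def by auto
  have "piecewise_monotone f1"
    using assms(9) unfolding class_U_def by blast
  then obtain n x where "monotone_partition f1 n x"
    using monotone_partition_if_piecewise_monotone by blast
  then have "universal_mountain f1"
    using universal_mountain_if_monotone_partition \<open>mountain f1\<close> by blast
  then obtain g1 g2 where "climbing_pair f1 f2 g1 g2"
    using \<open>mountain f2\<close> unfolding universal_mountain_def by blast
  then show ?thesis
    unfolding climbing_pair_def mountain_def by blast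
qed

end
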